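(* For every integer $m\ge 1$ there exist polynomials $U_m(x),V_m(x)$ with rational coefficients, of degrees $2m-1$ and $2m$ respectively, which take integer values at integers, such that for all integers $n\ge2$ $$\sum_{k=1}^n(-1)^k\cot^{2m-1}\frac{(2k-1)\pi}{4n}=U_m(n),\qquad \sum_{k=1}^n\cot^{2m}\frac{(2k-1)\pi}{4n}=V_m(n).$$ *)

theory Defs
  imports "HOL-Analysis.Analysis" "HOL-Computational_Algebra.Polynomial"
begin

definition int_valued_poly :: "rat poly \<Rightarrow> bool" where
  "int_valued_poly p \<longleftrightarrow> (\<forall>z::int. poly p (of_int z) \<in> \<int>)"

end

theory Submission
  imports Defs
begin

text \<open>
  Put \<open>\<theta>\<^sub>k = (2k - 1)\<pi>/(4n)\<close>. The numbers \<open>tan((-1)\<^sup>k \<theta>\<^sub>k)\<close>, \<open>k = 1..n\<close>, are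
  exactly the roots of \<open>G\<^sub>n(t) = Re (1 + it)\<^sup>n + Im (1 + it)\<^sup>n = \<Sum>\<^sub>j \<plusminus>C(n,j) t\<^sup>j\<close>,
  because \<open>G\<^sub>n(tan x) = (cos nx + sin nx)/cos\<^sup>n x\<close>. As \<open>G\<^sub>n(0) = 1\<close>, this gives
  \<open>G\<^sub>n = \<Prod>\<^sub>k (1 - c\<^sub>k t)\<close> with \<open>c\<^sub>k = (-1)\<^sup>k cot \<theta>\<^sub>k\<close>, and Newton's identities
  express the power sums \<open>s\<^sub>p = \<Sum>\<^sub>k c\<^sub>k\<^sup>p\<close> recursively through the coefficients
  \<open>\<plusminus>C(n,j)\<close>. These are integer-valued polynomials in \<open>n\<close> of degree \<open>j\<close>, so \<open>s\<^sub>p\<close>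
  is an integer-valued polynomial in \<open>n\<close> of degree at most \<open>p\<close>; both sums of the
  theorem are such power sums. The degree is exactly \<open>p\<close> because \<open>|s\<^sub>p|\<close> is at
  least \<open>cot\<^sup>p \<theta>\<^sub>1 - cot\<^sup>p \<theta>\<^sub>2\<close>, which grows like a positive multiple of \<open>n\<^sup>p\<close>.
\<close>

lemma linear_times_geometric_poly:
  fixes a :: "'a::comm_ring_1"
  shows "[:1, -a:] * (\<Sum>i\<le>p. monom (a ^ Suc i) i) = [:a:] - monom (a ^ (p + 2)) (Suc p)"
proof (induction p)
  case 0
  show ?case by (simp add: poly_eq_iff coeff_pCons power2_eq_square split: nat.split)
next
  case (Suc p)
  have linear: "[:1, -a:] = 1 - monom a 1"
    by (simp add: poly_eq_iff coeff_pCons split: nat.split)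
  have "[:1, -a:] * monom (a ^ (p + 2)) (Suc p)
      = monom (a ^ (p + 2)) (Suc p) - monom (a ^ (p + 3)) (p + 2)"
    unfolding linear by (simp add: algebra_simps mult_monom eval_nat_numeral)
  with Suc.IH show ?case
    by (simp add: distrib_left eval_nat_numeral)
qed

lemma newton_identity:
  fixes c :: "'k \<Rightarrow> 'a::idom"
  assumes "finite K"
  shows "(\<Sum>j\<le>p. coeff (\<Prod>k\<in>K. [:1, - c k:]) j * (\<Sum>k\<in>K. c k ^ (p + 1 - j)))
    = - of_nat (p + 1) * coeff (\<Prod>k\<in>K. [:1, - c k:]) (p + 1)"
proof -
  define E where "E = (\<Prod>k\<in>K. [:1, - c k:])"
  define E' where "E' k = (\<Prod>l\<in>K - {k}. [:1, - c l:])" for k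
  \<comment> \<open>\<open>H\<close> truncates \<open>\<Sum>\<^sub>k c\<^sub>k/(1 - c\<^sub>k t) = - pderiv E / E\<close>; compare coefficients of \<open>t\<^sup>p\<close> in \<open>E H\<close>.\<close>
  define H where "H = (\<Sum>i\<le>p. monom (\<Sum>k\<in>K. c k ^ Suc i) i)"
  have E_split: "E = [:1, - c k:] * E' k" if "k \<in> K" for k
    unfolding E_def E'_def using assms(1) that by (simp add: prod.remove)
  have "E * H = (\<Sum>k\<in>K. E * (\<Sum>i\<le>p. monom (c k ^ Suc i) i))"
    unfolding H_def by (simp add: monom_sum sum.swap[of _ K] sum_distrib_left)
  also have "\<dots> = (\<Sum>k\<in>K. E' k * ([:c k:] - monom (c k ^ (p + 2)) (Suc p)))"
  proof (intro sum.cong refl)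
    fix k assume "k \<in> K"
    then have "E * (\<Sum>i\<le>p. monom (c k ^ Suc i) i)
        = E' k * ([:1, - c k:] * (\<Sum>i\<le>p. monom (c k ^ Suc i) i))"
      by (simp only: E_split mult.assoc mult.left_commute)
    then show "E * (\<Sum>i\<le>p. monom (c k ^ Suc i) i)
        = E' k * ([:c k:] - monom (c k ^ (p + 2)) (Suc p))"
      by (simp only: linear_times_geometric_poly)
  qed
  also have "\<dots> = - pderiv E - (\<Sum>k\<in>K. monom (c k ^ (p + 2)) (Suc p) * E' k)"
    by (simp add: E_def E'_def pderiv_prod algebra_simps sum_subtractf pderiv_pCons sum_negf)
  finally have EH: "E * H = - pderiv E - (\<Sum>k\<in>K. monom (c k ^ (p + 2)) (Suc p) * E' k)" .
  have high_terms: "coeff (q * monom a (Suc p)) p = 0" for q and a :: 'a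
    by (subst mult.commute) (simp add: coeff_monom_mult)
  have "coeff (E * H) p = (\<Sum>j\<le>p. coeff E j * (\<Sum>k\<in>K. c k ^ (p + 1 - j)))"
    unfolding coeff_mult H_def by (intro sum.cong refl) (auto simp: coeff_sum Suc_diff_le)
  moreover have "coeff (E * H) p = - of_nat (p + 1) * coeff E (p + 1)"
    unfolding EH by (simp add: coeff_sum coeff_pderiv algebra_simps high_terms)
  ultimately show ?thesis by (simp add: E_def)
qed

lemma poly_eq_prod_inverse_roots:
  fixes G :: "'a::field poly" and x :: "'k \<Rightarrow> 'a"
  assumes "finite K" "degree G \<le> card K" "poly G 0 = 1" "inj_on x K"
    and "\<And>k. k \<in> K \<Longrightarrow> x k \<noteq> 0" "\<And>k. k \<in> K \<Longrightarrow> poly G (x k) = 0"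
  shows "G = (\<Prod>k\<in>K. [:1, - inverse (x k):])"
proof (rule poly_eqI_degree)
  let ?E = "\<Prod>k\<in>K. [:1, - inverse (x k):]"
  show "poly G z = poly ?E z" if z: "z \<in> insert 0 (x ` K)" for z
  proof (cases "z = 0")
    case True
    then show ?thesis using assms(3) by (simp add: poly_prod)
  next
    case False
    then obtain k where k: "k \<in> K" "z = x k" using z by auto
    then have "poly ?E z = 0"
      using assms(1,5) by (auto simp: poly_prod intro!: prod_zero bexI[of _ k])
    then show ?thesis using k assms(6) by simp
  qed
  have card_A: "card (insert 0 (x ` K)) = Suc (card K)"
    using assms(1,4,5) by (subst card_insert_disjoint) (auto simp: card_image)
  have "degree ?E \<le> (\<Sum>k\<in>K. degree [:1, - inverse (x k):])"
    by (rule degree_prod_sum_le[OF assms(1), unfolded comp_def])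
  also have "\<dots> \<le> (\<Sum>k\<in>K. 1)"
    by (intro sum_mono) simp
  finally show "degree ?E < card (insert 0 (x ` K))"
    using card_A by simp
  show "degree G < card (insert 0 (x ` K))"
    using card_A assms(2) by simp
qed

definition theta :: "nat \<Rightarrow> nat \<Rightarrow> real" where
  "theta n k = (2 * real k - 1) * pi / (4 * real n)"

definition signed_cot :: "nat \<Rightarrow> nat \<Rightarrow> real" where
  "signed_cot n k = (-1) ^ k * cot (theta n k)"

definition power_sum :: "nat \<Rightarrow> nat \<Rightarrow> real" where
  "power_sum n p = (\<Sum>k=1..n. signed_cot n k ^ p)"

definition quarter_sign :: "nat \<Rightarrow> int" where
  "quarter_sign j = (if j mod 4 < 2 then 1 else -1)"

definition tan_poly :: "nat \<Rightarrow> real poly" where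
  "tan_poly n = (\<Sum>j\<le>n. monom (of_int (quarter_sign j) * of_nat (n choose j)) j)"

lemma power_sum_odd: "odd p \<Longrightarrow> power_sum n p = (\<Sum>k=1..n. (-1) ^ k * cot (theta n k) ^ p)"
  unfolding power_sum_def signed_cot_def
  by (intro sum.cong refl) (simp add: power_mult_distrib minus_one_power_iff flip: power_mult)

lemma power_sum_even: "even p \<Longrightarrow> power_sum n p = (\<Sum>k=1..n. cot (theta n k) ^ p)"
  unfolding power_sum_def signed_cot_def
  by (intro sum.cong refl) (simp add: power_mult_distrib minus_one_power_iff flip: power_mult)

lemma theta_bounds:
  assumes "k \<in> {1..n}"
  shows "0 < theta n k" "theta n k < pi / 2"
proof -
  have "0 < real n" "0 < 2 * real k - 1" "(2 * real k - 1) * pi < (2 * real n) * pi"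
    using assms by auto
  then show "0 < theta n k" "theta n k < pi / 2"
    unfolding theta_def by (simp_all add: field_simps)
qed

lemma Re_plus_Im_i_power: "Re (\<i> ^ j) + Im (\<i> ^ j) = of_int (quarter_sign j)"
proof -
  define r where "r = j mod 4"
  have "\<i> ^ 4 = 1" by (simp add: eval_nat_numeral)
  then have "\<i> ^ j = \<i> ^ r"
    unfolding r_def
    by (subst mod_mult_div_eq[symmetric, of j 4]) (simp only: power_add power_mult, simp)
  moreover have "quarter_sign j = (if r < 2 then 1 else -1)"
    by (simp add: quarter_sign_def r_def)
  moreover have "r = 0 \<or> r = 1 \<or> r = 2 \<or> r = 3"
    unfolding r_def by auto
  ultimately show ?thesis
    by (elim disjE) (simp_all add: eval_nat_numeral)
qed

lemma coeff_tan_poly: "coeff (tan_poly n) j = of_int (quarter_sign j) * of_nat (n choose j)"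
  unfolding tan_poly_def by (simp add: coeff_sum coeff_monom)

lemma poly_tan_poly: "poly (tan_poly n) t = Re ((1 + \<i> * t) ^ n) + Im ((1 + \<i> * t) ^ n)"
proof -
  have "(1 + \<i> * t) ^ n = (\<Sum>j\<le>n. of_real (of_nat (n choose j) * t ^ j) * \<i> ^ j)"
    by (subst add.commute, subst binomial_ring) (simp add: power_mult_distrib mult_ac)
  then show ?thesis
    by (simp add: tan_poly_def poly_sum poly_monom Re_sum Im_sum
        flip: sum.distrib Re_plus_Im_i_power)
      (simp add: algebra_simps)
qed

lemma poly_tan_poly_tan:
  assumes "cos x \<noteq> 0"
  shows "poly (tan_poly n) (tan x) = (cos (n * x) + sin (n * x)) / cos x ^ n"
proof -
  have "1 + \<i> * tan x = cis x / cos x"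
    using assms by (simp add: complex_eq_iff tan_def)
  then show ?thesis
    by (simp only: poly_tan_poly power_divide Complex.DeMoivre)
      (simp add: add_divide_distrib flip: of_real_power)
qed

lemma tan_poly_root:
  assumes "k \<in> {1..n}"
  shows "poly (tan_poly n) (tan ((-1) ^ k * theta n k)) = 0"
proof -
  define x where "x = (-1) ^ k * theta n k"
  have "cos x > 0"
    using theta_bounds[OF assms] by (cases "even k") (auto simp: x_def intro!: cos_gt_zero_pi)
  moreover have "n * x + pi / 4 = (-1) ^ k * real (k div 2) * pi"
  proof (cases "even k")
    case True
    then obtain q where k: "k = 2 * q" by (rule evenE)
    have "real n * theta n k = (4 * real q - 1) * pi / 4"
      using assms by (simp add: theta_def k)
    then show ?thesis by (simp add: x_def k algebra_simps)
  next
    case False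
    then obtain q where k: "k = 2 * q + 1" by (rule oddE)
    have "real n * theta n k = (4 * real q + 1) * pi / 4"
      using assms by (simp add: theta_def k)
    then show ?thesis by (simp add: x_def k algebra_simps)
  qed
  then have "sin (n * x + pi / 4) = 0"
    by (cases "even k") simp_all
  then have "sqrt 2 / 2 * (cos (n * x) + sin (n * x)) = 0"
    by (simp add: sin_add sin_45 cos_45 algebra_simps)
  then have "cos (n * x) + sin (n * x) = 0" by simp
  ultimately show ?thesis
    unfolding x_def by (simp add: poly_tan_poly_tan)
qed

lemma tan_poly_eq_prod: "tan_poly n = (\<Prod>k\<in>{1..n}. [:1, - signed_cot n k:])"
proof -
  define x where "x k = tan ((-1) ^ k * theta n k)" for k
  have arctan_x: "arctan (x k) = (-1) ^ k * theta n k" if "k \<in> {1..n}" for k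
    using theta_bounds[OF that] unfolding x_def by (intro arctan_tan) (cases "even k"; simp)+
  have "tan_poly n = (\<Prod>k\<in>{1..n}. [:1, - inverse (x k):])"
  proof (rule poly_eq_prod_inverse_roots)
    show "degree (tan_poly n) \<le> card {1..n}"
      by (simp add: degree_le coeff_tan_poly)
    show "poly (tan_poly n) 0 = 1"
      by (simp add: poly_0_coeff_0 coeff_tan_poly quarter_sign_def)
    show "inj_on x {1..n}"
    proof (rule inj_onI)
      fix a b assume ab: "a \<in> {1..n}" "b \<in> {1..n}" "x a = x b"
      then have "(-1) ^ a * theta n a = (-1) ^ b * theta n b"
        using arctan_x by (metis (no_types))
      then have "\<bar>(-1) ^ a * theta n a\<bar> = \<bar>(-1) ^ b * theta n b\<bar>"
        by (rule arg_cong)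
      then have "theta n a = theta n b"
        using theta_bounds[OF ab(1)] theta_bounds[OF ab(2)] by (simp add: abs_mult)
      moreover have "real n \<noteq> 0" using ab by auto
      ultimately show "a = b"
        by (simp add: theta_def)
    qed
    show "x k \<noteq> 0" if k: "k \<in> {1..n}" for k
    proof
      assume "x k = 0"
      then have "(-1) ^ k * theta n k = 0" using arctan_x[OF k] by simp
      then show False using theta_bounds(1)[OF k] by simp
    qed
    show "poly (tan_poly n) (x k) = 0" if "k \<in> {1..n}" for k
      unfolding x_def by (rule tan_poly_root[OF that])
  qed simp
  moreover have "inverse (x k) = signed_cot n k" for k
    by (cases "even k") (simp_all add: x_def signed_cot_def cot_altdef)
  ultimately show ?thesis by simp
qed

lemma power_sum_newton:
  "(\<Sum>j\<le>p. coeff (tan_poly n) j * power_sum n (p + 1 - j))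
    = - of_nat (p + 1) * coeff (tan_poly n) (p + 1)"
  unfolding power_sum_def tan_poly_eq_prod by (rule newton_identity) simp

lemma power_sum_Suc:
  "power_sum n (Suc q) = - of_nat (Suc q) * coeff (tan_poly n) (Suc q)
     - (\<Sum>j=1..q. coeff (tan_poly n) j * power_sum n (Suc q - j))"
proof -
  have "{..q} = insert 0 {1..q}" by auto
  then have "(\<Sum>j\<le>q. coeff (tan_poly n) j * power_sum n (q + 1 - j))
      = power_sum n (Suc q) + (\<Sum>j=1..q. coeff (tan_poly n) j * power_sum n (Suc q - j))"
    by (simp add: coeff_tan_poly quarter_sign_def)
  with power_sum_newton[of n q] show ?thesis by (simp add: algebra_simps)
qed

definition binomial_poly :: "nat \<Rightarrow> 'a::field_char_0 poly" where
  "binomial_poly j = smult (inverse (fact j)) (\<Prod>i=0..<j. [:- of_nat i, 1:])"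

lemma poly_binomial_poly: "poly (binomial_poly j) x = x gchoose j"
  by (simp add: binomial_poly_def gbinomial_prod_rev poly_prod divide_inverse mult.commute)

lemma degree_binomial_poly: "degree (binomial_poly j :: 'a::field_char_0 poly) = j"
  by (simp add: binomial_poly_def degree_prod_eq_sum_degree)

lemma int_valued_poly_binomial_poly: "int_valued_poly (binomial_poly j)"
  unfolding int_valued_poly_def poly_binomial_poly
proof
  fix z :: int
  show "(of_int z :: rat) gchoose j \<in> \<int>"
  proof (cases "z \<ge> 0")
    case True
    then have "(of_int z :: rat) gchoose j = of_nat (nat z choose j)"
      by (simp add: binomial_gbinomial)
    then show ?thesis by simp
  next
    case False
    then have upper: "of_nat j - of_int z - 1 = (of_nat (nat (int j - z - 1)) :: rat)"
      by simp
    show ?thesis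
      unfolding gbinomial_negated_upper[of "of_int z"] upper
      by (simp add: Ints_mult flip: binomial_gbinomial)
  qed
qed

lemma int_valued_poly_diff: "int_valued_poly p \<Longrightarrow> int_valued_poly q \<Longrightarrow> int_valued_poly (p - q)"
  unfolding int_valued_poly_def by simp

lemma int_valued_poly_mult: "int_valued_poly p \<Longrightarrow> int_valued_poly q \<Longrightarrow> int_valued_poly (p * q)"
  unfolding int_valued_poly_def by simp

lemma int_valued_poly_smult: "c \<in> \<int> \<Longrightarrow> int_valued_poly p \<Longrightarrow> int_valued_poly (smult c p)"
  unfolding int_valued_poly_def by simp

lemma int_valued_poly_sum:
  "(\<And>j. j \<in> A \<Longrightarrow> int_valued_poly (f j)) \<Longrightarrow> int_valued_poly (\<Sum>j\<in>A. f j)"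
  unfolding int_valued_poly_def by (simp add: poly_sum Ints_sum)

definition tan_coeff_poly :: "nat \<Rightarrow> rat poly" where
  "tan_coeff_poly j = smult (of_int (quarter_sign j)) (binomial_poly j)"

lemma of_rat_poly_tan_coeff_poly:
  "of_rat (poly (tan_coeff_poly j) (of_nat n)) = coeff (tan_poly n) j"
  by (simp add: tan_coeff_poly_def coeff_tan_poly poly_binomial_poly of_rat_mult
      flip: binomial_gbinomial)

lemma int_valued_poly_tan_coeff_poly: "int_valued_poly (tan_coeff_poly j)"
  unfolding tan_coeff_poly_def by (intro int_valued_poly_smult int_valued_poly_binomial_poly) simp

lemma degree_tan_coeff_poly: "degree (tan_coeff_poly j) \<le> j"
  using degree_smult_le[of _ "binomial_poly j :: rat poly"]
  by (simp add: tan_coeff_poly_def degree_binomial_poly)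

lemma power_sum_eq_poly:
  assumes "1 \<le> p"
  shows "\<exists>T. int_valued_poly T \<and> degree T \<le> p \<and>
    (\<forall>n. power_sum n p = of_rat (poly T (of_nat n)))"
  using assms
proof (induction p rule: less_induct)
  case (less p)
  obtain q where p: "p = Suc q" using less.prems by (cases p) auto
  have "\<forall>r\<in>{1..q}. \<exists>T. int_valued_poly T \<and> degree T \<le> r \<and>
      (\<forall>n. power_sum n r = of_rat (poly T (of_nat n)))"
    using less.IH p by auto
  then obtain f where f: "\<forall>r\<in>{1..q}. int_valued_poly (f r) \<and> degree (f r) \<le> r \<and>
      (\<forall>n. power_sum n r = of_rat (poly (f r) (of_nat n)))"
    by (rule bchoice[THEN exE])
  have f_index: "p - j \<in> {1..q}" if "j \<in> {1..q}" for j
    using that p by auto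
  define T where
    "T = smult (- of_nat p) (tan_coeff_poly p) - (\<Sum>j=1..q. tan_coeff_poly j * f (p - j))"
  have "int_valued_poly T"
    unfolding T_def using f f_index
    by (intro int_valued_poly_diff int_valued_poly_sum int_valued_poly_mult int_valued_poly_smult
        int_valued_poly_tan_coeff_poly) auto
  moreover have "degree T \<le> p"
    unfolding T_def
  proof (intro degree_diff_le degree_sum_le)
    show "degree (smult (- of_nat p) (tan_coeff_poly p)) \<le> p"
      using degree_smult_le degree_tan_coeff_poly order.trans by blast
    show "degree (tan_coeff_poly j * f (p - j)) \<le> p" if "j \<in> {1..q}" for j
      using degree_mult_le[of "tan_coeff_poly j" "f (p - j)"] degree_tan_coeff_poly[of j]
        bspec[OF f f_index[OF that]] that p
      by auto
  qed simp
  moreover have "power_sum n p = of_rat (poly T (of_nat n))" for n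
  proof -
    have "(\<Sum>j=1..q. coeff (tan_poly n) j * power_sum n (p - j))
        = (\<Sum>j=1..q. of_rat (poly (tan_coeff_poly j * f (p - j)) (of_nat n)))"
      using f f_index by (intro sum.cong refl) (simp add: of_rat_mult of_rat_poly_tan_coeff_poly)
    then show ?thesis
      unfolding p power_sum_Suc
      by (simp add: T_def poly_sum of_rat_sum of_rat_diff of_rat_mult of_rat_poly_tan_coeff_poly p)
  qed
  ultimately show ?case by blast
qed

lemma cot_le_inverse:
  fixes x :: real
  assumes "0 < x" "x < pi / 2"
  shows "cot x \<le> 1 / x"
proof -
  have "\<bar>x\<bar> \<le> \<bar>tan x\<bar>"
    using assms by (intro abs_tan_ge) auto
  then have "x \<le> tan x"
    using tan_gt_zero[OF assms] assms by simp
  then have "inverse (tan x) \<le> inverse x"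
    using assms by (intro le_imp_inverse_le) auto
  then show ?thesis
    by (simp add: cot_altdef inverse_eq_divide)
qed

lemma cot_ge_sqrt2_div:
  fixes x :: real
  assumes "0 < x" "x \<le> pi / 4"
  shows "sqrt 2 / 2 / x \<le> cot x"
proof -
  have "sqrt 2 / 2 \<le> cos x"
    unfolding cos_45[symmetric] using assms by (subst cos_mono_le_eq) auto
  moreover have "0 < sin x" "sin x \<le> x"
    using assms sin_x_le_x by (auto intro!: sin_gt_zero)
  moreover have "0 \<le> cos x"
    using assms by (intro cos_ge_zero) auto
  ultimately have "sqrt 2 / 2 / x \<le> cos x / sin x"
    using assms by (intro frac_le) auto
  then show ?thesis by (simp add: cot_def)
qed

lemma cot_antimono:
  fixes x y :: real
  assumes "0 < x" "x \<le> y" "y < pi / 2"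
  shows "cot y \<le> cot x"
  using assms unfolding cot_altdef
  by (intro le_imp_inverse_le tan_mono_le tan_gt_zero) auto

lemma alternating_sum_bounds:
  fixes b :: "nat \<Rightarrow> 'a::linordered_idom"
  assumes "0 < L" "\<And>j. j < L \<Longrightarrow> 0 \<le> b j" "\<And>j. Suc j < L \<Longrightarrow> b (Suc j) \<le> b j"
  shows "0 \<le> (\<Sum>j<L. (-1) ^ j * b j) \<and> (\<Sum>j<L. (-1) ^ j * b j) \<le> b 0"
  using assms
proof (induction L arbitrary: b)
  case 0
  then show ?case by simp
next
  case (Suc L)
  have shift: "(\<Sum>j<Suc L. (-1) ^ j * b j) = b 0 - (\<Sum>j<L. (-1) ^ j * b (Suc j))"
    by (subst sum.lessThan_Suc_shift) (simp add: sum_negf)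
  show ?case
  proof (cases "L = 0")
    case False
    then have "0 \<le> (\<Sum>j<L. (-1) ^ j * b (Suc j)) \<and> (\<Sum>j<L. (-1) ^ j * b (Suc j)) \<le> b 1"
      using Suc.IH[of "\<lambda>j. b (Suc j)"] Suc.prems by simp
    moreover have "b 1 \<le> b 0" using Suc.prems False by simp
    ultimately show ?thesis unfolding shift by simp
  qed (use Suc.prems in simp)
qed

lemma cot_theta_pos: "k \<in> {1..n} \<Longrightarrow> 0 < cot (theta n k)"
  using theta_bounds by (intro cot_gt_zero) auto

lemma cot_theta_Suc_le:
  assumes "1 \<le> k" "Suc k \<le> n"
  shows "cot (theta n (Suc k)) \<le> cot (theta n k)"
proof (rule cot_antimono)
  show "theta n k \<le> theta n (Suc k)"
    by (simp add: theta_def divide_right_mono)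
qed (use assms theta_bounds[of k n] theta_bounds[of "Suc k" n] in auto)

lemma abs_power_sum_ge:
  assumes "2 \<le> n" "1 \<le> p"
  shows "cot (theta n 1) ^ p - cot (theta n 2) ^ p \<le> \<bar>power_sum n p\<bar>"
proof (cases "even p")
  case True
  have "cot (theta n 1) ^ p + cot (theta n 2) ^ p = (\<Sum>k\<in>{1, 2}. cot (theta n k) ^ p)"
    by simp
  also have "\<dots> \<le> power_sum n p"
    unfolding power_sum_even[OF True] using assms cot_theta_pos
    by (intro sum_mono2) (auto intro: less_imp_le)
  finally have "cot (theta n 1) ^ p + cot (theta n 2) ^ p \<le> power_sum n p" .
  moreover have "0 \<le> cot (theta n 2) ^ p"
    using cot_theta_pos[of 2 n] assms by simp
  ultimately show ?thesis
    using abs_ge_self[of "power_sum n p"] by linarith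
next
  case False
  define b where "b j = cot (theta n (Suc j)) ^ p" for j
  obtain L where L: "n = Suc L" "0 < L"
    using assms by (cases n) auto
  have b_nonneg: "0 \<le> b (Suc j)" if "j < L" for j
    using cot_theta_pos[of "Suc (Suc j)" n] that L by (simp add: b_def)
  have b_antimono: "b (Suc (Suc j)) \<le> b (Suc j)" if "Suc j < L" for j
    using cot_theta_Suc_le[of "Suc (Suc j)" n] cot_theta_pos[of "Suc (Suc (Suc j))" n] that L
    by (simp add: b_def power_mono)
  have "power_sum n p = (\<Sum>j<n. (-1) ^ Suc j * b j)"
    unfolding power_sum_odd[OF False] b_def by (simp add: sum.atLeast1_atMost_eq)
  also have "\<dots> = (\<Sum>j<L. (-1) ^ j * b (Suc j)) - b 0"
    unfolding L(1) sum.lessThan_Suc_shift by simp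
  finally have "power_sum n p = (\<Sum>j<L. (-1) ^ j * b (Suc j)) - b 0" .
  moreover have "(\<Sum>j<L. (-1) ^ j * b (Suc j)) \<le> b 1"
    using alternating_sum_bounds[of L "\<lambda>j. b (Suc j)"] L(2) b_nonneg b_antimono by simp
  ultimately show ?thesis
    using abs_ge_minus_self[of "power_sum n p"] by (simp add: b_def numeral_2_eq_2)
qed

lemma cot_theta_1_ge:
  assumes "1 \<le> n"
  shows "2 * sqrt 2 / pi * real n \<le> cot (theta n 1)"
proof -
  have "theta n 1 = pi / (4 * real n)" "0 < theta n 1" "theta n 1 \<le> pi / 4"
    using assms by (auto simp: theta_def field_simps)
  then show ?thesis
    using cot_ge_sqrt2_div[of "theta n 1"] by (simp add: mult.commute mult.left_commute)
qed

lemma cot_theta_2_le: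
  assumes "2 \<le> n"
  shows "cot (theta n 2) \<le> 4 / (3 * pi) * real n"
  using cot_le_inverse[of "theta n 2"] theta_bounds[of 2 n] assms by (simp add: theta_def)

lemma power_sum_lower_bound:
  assumes "2 \<le> n" "1 \<le> p"
  shows "((2 * sqrt 2 / pi) ^ p - (4 / (3 * pi)) ^ p) * real n ^ p \<le> \<bar>power_sum n p\<bar>"
proof -
  have "(2 * sqrt 2 / pi * real n) ^ p \<le> cot (theta n 1) ^ p"
    using assms by (intro power_mono cot_theta_1_ge) auto
  moreover have "cot (theta n 2) ^ p \<le> (4 / (3 * pi) * real n) ^ p"
    using assms cot_theta_pos[of 2 n] by (intro power_mono cot_theta_2_le) auto
  moreover have "((2 * sqrt 2 / pi) ^ p - (4 / (3 * pi)) ^ p) * real n ^ p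
      = (2 * sqrt 2 / pi * real n) ^ p - (4 / (3 * pi) * real n) ^ p"
    by (simp only: power_mult_distrib left_diff_distrib)
  ultimately show ?thesis
    using abs_power_sum_ge[OF assms] by linarith
qed

lemma degree_ge_if_poly_lower_bound:
  fixes Q :: "real poly"
  assumes "0 < c" and "\<forall>\<^sub>F n in sequentially. c * real n ^ d \<le> \<bar>poly Q (real n)\<bar>"
  shows "d \<le> degree Q"
proof (rule ccontr)
  assume "\<not> d \<le> degree Q"
  define k where "k = d - degree Q"
  then have "k \<noteq> 0" "d = degree Q + k"
    using \<open>\<not> d \<le> degree Q\<close> by auto
  have "((\<lambda>x. poly Q x / x ^ degree Q * inverse (x ^ k)) \<longlongrightarrow> 0) at_infinity"
    using tendsto_mult[OF poly_divide_tendsto_aux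
        filterlim_compose[OF tendsto_inverse_0 filterlim_power_at_infinity[OF \<open>k \<noteq> 0\<close>]]]
    by simp
  moreover have "filterlim real at_infinity sequentially"
    using filterlim_real_sequentially at_top_le_at_infinity by (rule filterlim_mono) simp
  ultimately have "((\<lambda>n. poly Q (real n) / real n ^ degree Q * inverse (real n ^ k)) \<longlongrightarrow> 0)
      sequentially"
    by (rule filterlim_compose)
  moreover have "\<forall>\<^sub>F n in sequentially.
      poly Q (real n) / real n ^ degree Q * inverse (real n ^ k) = poly Q (real n) / real n ^ d"
    using eventually_gt_at_top[of 0]
    by eventually_elim (simp add: \<open>d = degree Q + k\<close> field_simps power_add)
  ultimately have "((\<lambda>n. poly Q (real n) / real n ^ d) \<longlongrightarrow> 0) sequentially"
    by (rule Lim_transform_eventually)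
  then have "\<forall>\<^sub>F n in sequentially. \<bar>poly Q (real n) / real n ^ d\<bar> < c"
    using \<open>0 < c\<close> by (auto dest: tendstoD)
  moreover have "\<forall>\<^sub>F n in sequentially. c \<le> \<bar>poly Q (real n) / real n ^ d\<bar>"
    using assms(2) eventually_gt_at_top[of 0]
    by eventually_elim (simp add: abs_divide pos_le_divide_eq)
  ultimately have "\<forall>\<^sub>F n in sequentially. False"
    by eventually_elim simp
  then show False by simp
qed

lemma poly_map_poly_of_rat:
  "poly (map_poly of_rat p) (of_rat x) = (of_rat (poly p x) :: 'a::field_char_0)"
  by (induction p) (simp_all add: map_poly_pCons of_rat_add of_rat_mult)

lemma power_sum_eq_poly_degree:
  assumes "1 \<le> p"
  shows "\<exists>T. int_valued_poly T \<and> degree T = p \<and>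
    (\<forall>n. power_sum n p = of_rat (poly T (of_nat n)))"
proof -
  obtain T where T: "int_valued_poly T" "degree T \<le> p"
    "\<forall>n. power_sum n p = of_rat (poly T (of_nat n))"
    using power_sum_eq_poly[OF assms] by blast
  have "p \<le> degree (map_poly (of_rat :: rat \<Rightarrow> real) T)"
  proof (rule degree_ge_if_poly_lower_bound)
    have "2 < 3 * sqrt (2::real)"
      using real_sqrt_ge_one[of 2] by linarith
    then have "4 / (3 * pi) < 2 * sqrt 2 / pi"
      by (simp add: field_simps)
    then show "0 < (2 * sqrt 2 / pi) ^ p - (4 / (3 * pi)) ^ p"
      using assms by (simp add: power_strict_mono)
    show "\<forall>\<^sub>F n in sequentially. ((2 * sqrt 2 / pi) ^ p - (4 / (3 * pi)) ^ p) * real n ^ p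
        \<le> \<bar>poly (map_poly of_rat T) (real n)\<bar>"
      using eventually_ge_at_top[of 2]
    proof eventually_elim
      case (elim n)
      have "poly (map_poly of_rat T) (real n) = power_sum n p"
        using poly_map_poly_of_rat[of T "of_nat n"] T(3) by simp
      then show ?case
        using power_sum_lower_bound[OF elim assms] by simp
    qed
  qed
  then have "degree T = p"
    using T(2) by (simp add: degree_map_poly)
  with T show ?thesis by blast
qed

theorem corollary3p3:
  fixes m :: nat
  assumes "m \<ge> 1"
  shows "\<exists>U V :: rat poly.
    degree U = 2*m - 1 \<and> degree V = 2*m \<and>
    int_valued_poly U \<and> int_valued_poly V \<and>
    (\<forall>n::nat. n \<ge> 2 \<longrightarrow>
       (\<Sum>k=1..n. (-1)^k * cot ((2*real k - 1) * pi / (4*real n)) ^ (2*m - 1))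
         = of_rat (poly U (of_nat n)) \<and>
       (\<Sum>k=1..n. cot ((2*real k - 1) * pi / (4*real n)) ^ (2*m))
         = of_rat (poly V (of_nat n)))"
proof -
  have p: "1 \<le> 2*m - 1" "1 \<le> 2*m" using assms by auto
  obtain U where U: "int_valued_poly U" "degree U = 2*m - 1"
    "\<forall>n. power_sum n (2*m - 1) = of_rat (poly U (of_nat n))"
    using power_sum_eq_poly_degree[OF p(1)] by blast
  obtain V where V: "int_valued_poly V" "degree V = 2*m"
    "\<forall>n. power_sum n (2*m) = of_rat (poly V (of_nat n))"
    using power_sum_eq_poly_degree[OF p(2)] by blast
  have odd: "odd (2*m - 1)" using assms by simp
  have "(\<Sum>k=1..n. (-1)^k * cot ((2*real k - 1) * pi / (4*real n)) ^ (2*m - 1))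
      = of_rat (poly U (of_nat n))" for n
    using power_sum_odd[OF odd, of n] U(3) by (simp add: theta_def)
  moreover have "(\<Sum>k=1..n. cot ((2*real k - 1) * pi / (4*real n)) ^ (2*m))
      = of_rat (poly V (of_nat n))" for n
    using power_sum_even[of "2*m" n] V(3) by (simp add: theta_def)
  ultimately show ?thesis
    using U(1,2) V(1,2) by blast
qed

end
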